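(* The formulas $$\forall \mathbf{V} N\big(\mathit{Atleast}^{\mathbf{X};\mathbf{V}}_F(\mathbf{V},N) \leftrightarrow \exists\mathbf{X}\,\mathit{Start}^{\mathbf{X};\mathbf{V}}_F(\mathbf{X},\mathbf{V},N)\big)$$ and $$\forall \mathbf{V} N\big(\mathit{Atmost}^{\mathbf{X};\mathbf{V}}_F(\mathbf{V},N) \leftrightarrow \neg\mathit{Atleast}^{\mathbf{X};\mathbf{V}}_F(\mathbf{V},N+\overline 1)\big)$$ are provable in the deductive system $\mathit{HT}_{\#}$.
   Context: Formulas are over a two-sorted signature $\sigma_2$ with sorts general and integer (integer a subsort of general). It contains: numerals $\overline n$ (integer constants), other precomputed terms (general constants), $|\cdot|,+,-,\times$ on integers, predicate constants $p/n$ (general arguments), comparison predicates $=,\neq,<,>,\leq,\geq$, and, for disjoint lists $\mathbf{X},\mathbf{V}$ of distinct general variables and a formula $F$ over $\sigma_0$ (the signature without Atleast/Atmost/Start) with free variables among $\mathbf{X},\mathbf{V}$, predicate constants $\mathit{Atleast}^{\mathbf{X};\mathbf{V}}_F$, $\mathit{Atmost}^{\mathbf{X};\mathbf{V}}_F$ (arity $|\mathbf{V}|+1$, general arguments) and $\mathit{Start}^{\mathbf{X};\mathbf{V}}_F$ (arity $|\mathbf{X}|+|\mathbf{V}|+1$, last argument integer). $N$ is an integer variable, $Y$ a general variable. $\mathit{HT}_{\#}$ is first-order intuitionistic logic over $\sigma_2$ extended by: the schemas $F\lor(F\to G)\lor\neg G$ and $\exists X(F\to\forall X F)$; Std, the set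 of sentences over $\sigma_0$ not containing predicates $p/n$ that are true in standard interpretations (general domain = precomputed terms, integer domain = numerals, constants denote themselves, arithmetic as usual, comparisons follow the fixed total order on precomputed terms in which numerals are contiguous and ordered as integers); Ind, the universal closures of $F^N_{\overline 0}\land\forall N(N\geq\overline 0\land F\to F^N_{N+\overline 1})\to\forall N(N\geq\overline 0\to F)$ for all $F$ over $\sigma_2$; $D_0$: $\forall\mathbf{X}\mathbf{V}N(N\leq\overline 0\to\mathit{Start}^{\mathbf{X};\mathbf{V}}_F(\mathbf{X},\mathbf{V},N))$, $\forall\mathbf{X}\mathbf{V}(\mathit{Start}^{\mathbf{X};\mathbf{V}}_F(\mathbf{X},\mathbf{V},\overline 1)\leftrightarrow F)$, $\forall\mathbf{X}\mathbf{V}N(N>\overline 0\to(\mathit{Start}^{\mathbf{X};\mathbf{V}}_F(\mathbf{X},\mathbf{V},N+\overline 1)\leftrightarrow F\land\exists\mathbf{U}(\mathbf{X}<\mathbf{U}\land\mathit{Start}^{\mathbf{X};\mathbf{V}}_F(\mathbf{U},\mathbf{V},N))))$ with $<$ lexicographic order on tuples and $\mathbf{U}$ fresh; $D_1$: $\forall\mathbf{V}Y(\mathit{Atleast}^{\mathbf{X};\mathbf{V}}_F(\mathbf{V},Y)\leftrightarrow\exists\mathbf{X}N(\mathit{Start}^{\mathbf{X};\mathbf{V}}_F(\mathbf{X},\mathbf{V},N)\land N\geq Y))$ and $\forall\mathbf{V}Y(\mathit{Atmost}^{\mathbf{X};\mathbf{V}}_F(\mathbf{V},Y)\leftrightarrow\forall\mathbf{X}N(\mathit{Start}^{\mathbf{X};\mathbf{V}}_F(\mathbf{X},\mathbf{V},N)\to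 N\leq Y))$. *)

theory Defs
  imports Main "HOL-Library.Char_ord" "HOL-Library.List_Lexorder"
begin

section \<open>Precomputed terms and their fixed total order\<close>

text \<open>General constants: the precomputed terms other than numerals
  (inf, symbolic constants, sup).  Values of the standard interpretation
  are numerals (integers) or general constants.\<close>

datatype gconst = CInf | CSym string | CSup
datatype pval = VNum int | VCon gconst

fun prank :: "pval \<Rightarrow> nat" where
  "prank (VCon CInf) = 0"
| "prank (VNum _) = 1"
| "prank (VCon (CSym _)) = 2"
| "prank (VCon CSup) = 3"

definition pless :: "pval \<Rightarrow> pval \<Rightarrow> bool" where
  "pless a b \<longleftrightarrow> prank a < prank b \<or>
     (prank a = prank b \<and>
       (case (a, b) of (VNum i, VNum j) \<Rightarrow> i < j
         | (VCon (CSym s), VCon (CSym t)) \<Rightarrow> s < t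
         | _ \<Rightarrow> False))"

datatype var = VG nat | VI nat

datatype iterm = IV nat | INum int | IAbs iterm
  | IPlus iterm iterm | IMinus iterm iterm | ITimes iterm iterm

datatype gterm = GV nat | GCon gconst | GI iterm

datatype cmp = Eq | Neq | Lt | Gt | Le | Ge

text \<open>Atom p n ts: predicate constant p/n applied to ts.
  AtLeast X V F ts, AtMost X V F ts, Start X V F ts: the predicate constants
  indexed by the general-variable lists X, V and the sigma_0 formula F.\<close>
datatype form = Bot
  | Atom string nat "gterm list"
  | AtLeast "nat list" "nat list" form "gterm list"
  | AtMost "nat list" "nat list" form "gterm list"
  | Start "nat list" "nat list" form "gterm list"
  | Cmp cmp gterm gterm
  | And form form | Or form form | Imp form form
  | All var form | Ex var form

definition Neg :: "form \<Rightarrow> form" where "Neg F = Imp F Bot"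
definition Iff :: "form \<Rightarrow> form \<Rightarrow> form" where "Iff F G = And (Imp F G) (Imp G F)"
definition allL :: "var list \<Rightarrow> form \<Rightarrow> form" where "allL vs F = foldr All vs F"
definition exL :: "var list \<Rightarrow> form \<Rightarrow> form" where "exL vs F = foldr Ex vs F"
definition num :: "int \<Rightarrow> gterm" where "num k = GI (INum k)"
definition ivar :: "nat \<Rightarrow> gterm" where "ivar n = GI (IV n)"
definition succ :: "nat \<Rightarrow> gterm" where "succ n = GI (IPlus (IV n) (INum 1))"

fun ivars :: "iterm \<Rightarrow> var set" where
  "ivars (IV n) = {VI n}"
| "ivars (INum _) = {}"
| "ivars (IAbs t) = ivars t"
| "ivars (IPlus a b) = ivars a \<union> ivars b"
| "ivars (IMinus a b) = ivars a \<union> ivars b"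
| "ivars (ITimes a b) = ivars a \<union> ivars b"

fun gvars :: "gterm \<Rightarrow> var set" where
  "gvars (GV n) = {VG n}"
| "gvars (GCon _) = {}"
| "gvars (GI t) = ivars t"

text \<open>Free variables; the index formula of AtLeast/AtMost/Start is part of the
  predicate symbol and contributes no free variables.\<close>
fun fv :: "form \<Rightarrow> var set" where
  "fv Bot = {}"
| "fv (Atom _ _ ts) = \<Union>(gvars ` set ts)"
| "fv (AtLeast _ _ _ ts) = \<Union>(gvars ` set ts)"
| "fv (AtMost _ _ _ ts) = \<Union>(gvars ` set ts)"
| "fv (Start _ _ _ ts) = \<Union>(gvars ` set ts)"
| "fv (Cmp _ a b) = gvars a \<union> gvars b"
| "fv (And F G) = fv F \<union> fv G"
| "fv (Or F G) = fv F \<union> fv G"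
| "fv (Imp F G) = fv F \<union> fv G"
| "fv (All v F) = fv F - {v}"
| "fv (Ex v F) = fv F - {v}"

fun isubst :: "nat \<Rightarrow> iterm \<Rightarrow> iterm \<Rightarrow> iterm" where
  "isubst n s (IV m) = (if m = n then s else IV m)"
| "isubst n s (INum k) = INum k"
| "isubst n s (IAbs t) = IAbs (isubst n s t)"
| "isubst n s (IPlus a b) = IPlus (isubst n s a) (isubst n s b)"
| "isubst n s (IMinus a b) = IMinus (isubst n s a) (isubst n s b)"
| "isubst n s (ITimes a b) = ITimes (isubst n s a) (isubst n s b)"

fun gsubst :: "var \<Rightarrow> gterm \<Rightarrow> gterm \<Rightarrow> gterm" where
  "gsubst (VG n) t (GV m) = (if m = n then t else GV m)"
| "gsubst (VI n) t (GV m) = GV m"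
| "gsubst v t (GCon c) = GCon c"
| "gsubst (VG n) t (GI s) = GI s"
| "gsubst (VI n) t (GI s) = GI (case t of GI r \<Rightarrow> isubst n r s | _ \<Rightarrow> s)"

fun fits :: "var \<Rightarrow> gterm \<Rightarrow> bool" where
  "fits (VG _) t = True"
| "fits (VI _) t = (\<exists>s. t = GI s)"

fun subst :: "var \<Rightarrow> gterm \<Rightarrow> form \<Rightarrow> form" where
  "subst v t Bot = Bot"
| "subst v t (Atom p k ts) = Atom p k (map (gsubst v t) ts)"
| "subst v t (AtLeast X V F ts) = AtLeast X V F (map (gsubst v t) ts)"
| "subst v t (AtMost X V F ts) = AtMost X V F (map (gsubst v t) ts)"
| "subst v t (Start X V F ts) = Start X V F (map (gsubst v t) ts)"
| "subst v t (Cmp c a b) = Cmp c (gsubst v t a) (gsubst v t b)"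
| "subst v t (And F G) = And (subst v t F) (subst v t G)"
| "subst v t (Or F G) = Or (subst v t F) (subst v t G)"
| "subst v t (Imp F G) = Imp (subst v t F) (subst v t G)"
| "subst v t (All w F) = (if w = v then All w F else All w (subst v t F))"
| "subst v t (Ex w F) = (if w = v then Ex w F else Ex w (subst v t F))"

fun free_for :: "gterm \<Rightarrow> var \<Rightarrow> form \<Rightarrow> bool" where
  "free_for t v (And F G) = (free_for t v F \<and> free_for t v G)"
| "free_for t v (Or F G) = (free_for t v F \<and> free_for t v G)"
| "free_for t v (Imp F G) = (free_for t v F \<and> free_for t v G)"
| "free_for t v (All w F) = (w = v \<or> ((v \<notin> fv F \<or> w \<notin> gvars t) \<and> free_for t v F))"
| "free_for t v (Ex w F) = (w = v \<or> ((v \<notin> fv F \<or> w \<notin> gvars t) \<and> free_for t v F))"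
| "free_for t v _ = True"

fun sigma0 :: "form \<Rightarrow> bool" where
  "sigma0 (AtLeast _ _ _ _) = False"
| "sigma0 (AtMost _ _ _ _) = False"
| "sigma0 (Start _ _ _ _) = False"
| "sigma0 (And F G) = (sigma0 F \<and> sigma0 G)"
| "sigma0 (Or F G) = (sigma0 F \<and> sigma0 G)"
| "sigma0 (Imp F G) = (sigma0 F \<and> sigma0 G)"
| "sigma0 (All _ F) = sigma0 F"
| "sigma0 (Ex _ F) = sigma0 F"
| "sigma0 _ = True"

fun pure :: "form \<Rightarrow> bool" where
  "pure (Atom _ _ _) = False"
| "pure (AtLeast _ _ _ _) = False"
| "pure (AtMost _ _ _ _) = False"
| "pure (Start _ _ _ _) = False"
| "pure (And F G) = (pure F \<and> pure G)"
| "pure (Or F G) = (pure F \<and> pure G)"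
| "pure (Imp F G) = (pure F \<and> pure G)"
| "pure (All _ F) = pure F"
| "pure (Ex _ F) = pure F"
| "pure _ = True"

fun is_int :: "gterm \<Rightarrow> bool" where
  "is_int (GI _) = True"
| "is_int _ = False"

fun wf :: "form \<Rightarrow> bool" where
  "wf Bot = True"
| "wf (Atom p k ts) = (length ts = k)"
| "wf (AtLeast X V F ts) = (distinct X \<and> distinct V \<and> set X \<inter> set V = {} \<and> sigma0 F \<and> wf F
      \<and> fv F \<subseteq> VG ` (set X \<union> set V) \<and> length ts = length V + 1)"
| "wf (AtMost X V F ts) = (distinct X \<and> distinct V \<and> set X \<inter> set V = {} \<and> sigma0 F \<and> wf F
      \<and> fv F \<subseteq> VG ` (set X \<union> set V) \<and> length ts = length V + 1)"
| "wf (Start X V F ts) = (distinct X \<and> distinct V \<and> set X \<inter> set V = {} \<and> sigma0 F \<and> wf F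
      \<and> fv F \<subseteq> VG ` (set X \<union> set V) \<and> length ts = length X + length V + 1 \<and> is_int (last ts))"
| "wf (Cmp _ _ _) = True"
| "wf (And F G) = (wf F \<and> wf G)"
| "wf (Or F G) = (wf F \<and> wf G)"
| "wf (Imp F G) = (wf F \<and> wf G)"
| "wf (All _ F) = wf F"
| "wf (Ex _ F) = wf F"

definition adm :: "nat list \<Rightarrow> nat list \<Rightarrow> form \<Rightarrow> bool" where
  "adm X V F \<longleftrightarrow> distinct X \<and> distinct V \<and> set X \<inter> set V = {} \<and> sigma0 F \<and> wf F
      \<and> fv F \<subseteq> VG ` (set X \<union> set V)"

section \<open>Standard interpretation\<close>

fun ival :: "(nat \<Rightarrow> int) \<Rightarrow> iterm \<Rightarrow> int" where
  "ival ai (IV n) = ai n"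
| "ival ai (INum k) = k"
| "ival ai (IAbs t) = \<bar>ival ai t\<bar>"
| "ival ai (IPlus a b) = ival ai a + ival ai b"
| "ival ai (IMinus a b) = ival ai a - ival ai b"
| "ival ai (ITimes a b) = ival ai a * ival ai b"

fun gval :: "(nat \<Rightarrow> pval) \<Rightarrow> (nat \<Rightarrow> int) \<Rightarrow> gterm \<Rightarrow> pval" where
  "gval ag ai (GV n) = ag n"
| "gval ag ai (GCon c) = VCon c"
| "gval ag ai (GI t) = VNum (ival ai t)"

fun cmpv :: "cmp \<Rightarrow> pval \<Rightarrow> pval \<Rightarrow> bool" where
  "cmpv Eq a b = (a = b)"
| "cmpv Neq a b = (a \<noteq> b)"
| "cmpv Lt a b = pless a b"
| "cmpv Gt a b = pless b a"
| "cmpv Le a b = (pless a b \<or> a = b)"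
| "cmpv Ge a b = (pless b a \<or> a = b)"

text \<open>Classical truth in the standard interpretation (predicate atoms are
  irrelevant here: only used for formulas without predicate constants).\<close>
fun sat :: "(nat \<Rightarrow> pval) \<Rightarrow> (nat \<Rightarrow> int) \<Rightarrow> form \<Rightarrow> bool" where
  "sat ag ai (Cmp c a b) = cmpv c (gval ag ai a) (gval ag ai b)"
| "sat ag ai (And F G) = (sat ag ai F \<and> sat ag ai G)"
| "sat ag ai (Or F G) = (sat ag ai F \<or> sat ag ai G)"
| "sat ag ai (Imp F G) = (sat ag ai F \<longrightarrow> sat ag ai G)"
| "sat ag ai (All (VG n) F) = (\<forall>d. sat (ag(n := d)) ai F)"
| "sat ag ai (All (VI n) F) = (\<forall>k. sat ag (ai(n := k)) F)"
| "sat ag ai (Ex (VG n) F) = (\<exists>d. sat (ag(n := d)) ai F)"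
| "sat ag ai (Ex (VI n) F) = (\<exists>k. sat ag (ai(n := k)) F)"
| "sat ag ai _ = False"

definition Std :: "form set" where
  "Std = {F. wf F \<and> sigma0 F \<and> pure F \<and> fv F = {} \<and> (\<forall>ag ai. sat ag ai F)}"

section \<open>The deductive system HT_#\<close>

fun lexless :: "nat list \<Rightarrow> nat list \<Rightarrow> form" where
  "lexless (x # xs) (u # us) =
     Or (Cmp Lt (GV x) (GV u)) (And (Cmp Eq (GV x) (GV u)) (lexless xs us))"
| "lexless _ _ = Bot"

text \<open>Hilbert-style intuitionistic first-order logic with equality (two sorts,
  integer a subsort of general), plus the HT_# axioms.  Axioms are open formulas;
  the generalization rule makes them equivalent to their universal closures.\<close>
inductive prov :: "form \<Rightarrow> bool" where
  ax_K: "wf A \<Longrightarrow> wf B \<Longrightarrow> prov (Imp A (Imp B A))"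
| ax_S: "wf A \<Longrightarrow> wf B \<Longrightarrow> wf C \<Longrightarrow>
     prov (Imp (Imp A (Imp B C)) (Imp (Imp A B) (Imp A C)))"
| ax_andE1: "wf A \<Longrightarrow> wf B \<Longrightarrow> prov (Imp (And A B) A)"
| ax_andE2: "wf A \<Longrightarrow> wf B \<Longrightarrow> prov (Imp (And A B) B)"
| ax_andI: "wf A \<Longrightarrow> wf B \<Longrightarrow> prov (Imp A (Imp B (And A B)))"
| ax_orI1: "wf A \<Longrightarrow> wf B \<Longrightarrow> prov (Imp A (Or A B))"
| ax_orI2: "wf A \<Longrightarrow> wf B \<Longrightarrow> prov (Imp B (Or A B))"
| ax_orE: "wf A \<Longrightarrow> wf B \<Longrightarrow> wf C \<Longrightarrow>
     prov (Imp (Imp A C) (Imp (Imp B C) (Imp (Or A B) C)))"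
| ax_botE: "wf A \<Longrightarrow> prov (Imp Bot A)"
| ax_allE: "wf F \<Longrightarrow> fits v t \<Longrightarrow> free_for t v F \<Longrightarrow> prov (Imp (All v F) (subst v t F))"
| ax_exI: "wf F \<Longrightarrow> fits v t \<Longrightarrow> free_for t v F \<Longrightarrow> prov (Imp (subst v t F) (Ex v F))"
| ax_eqrefl: "prov (Cmp Eq t t)"
| ax_eqsub: "wf F \<Longrightarrow> fits v s \<Longrightarrow> fits v t \<Longrightarrow> free_for s v F \<Longrightarrow> free_for t v F \<Longrightarrow>
     prov (Imp (Cmp Eq s t) (Imp (subst v s F) (subst v t F)))"
| r_mp: "prov A \<Longrightarrow> prov (Imp A B) \<Longrightarrow> prov B"
| r_allI: "prov (Imp B A) \<Longrightarrow> v \<notin> fv B \<Longrightarrow> prov (Imp B (All v A))"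
| r_exE: "prov (Imp A B) \<Longrightarrow> v \<notin> fv B \<Longrightarrow> prov (Imp (Ex v A) B)"
| r_gen: "prov A \<Longrightarrow> prov (All v A)"
| ax_ht: "wf F \<Longrightarrow> wf G \<Longrightarrow> prov (Or F (Or (Imp F G) (Neg G)))"
| ax_sqex: "wf F \<Longrightarrow> prov (Ex v (Imp F (All v F)))"
| ax_std: "F \<in> Std \<Longrightarrow> prov F"
| ax_ind: "wf F \<Longrightarrow> prov (Imp
     (And (subst (VI n) (num 0) F)
          (All (VI n) (Imp (And (Cmp Ge (ivar n) (num 0)) F) (subst (VI n) (succ n) F))))
     (All (VI n) (Imp (Cmp Ge (ivar n) (num 0)) F)))"
| ax_d0a: "adm X V F \<Longrightarrow> prov (allL (map VG X @ map VG V @ [VI n])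
     (Imp (Cmp Le (ivar n) (num 0)) (Start X V F (map GV X @ map GV V @ [ivar n]))))"
| ax_d0b: "adm X V F \<Longrightarrow> prov (allL (map VG X @ map VG V)
     (Iff (Start X V F (map GV X @ map GV V @ [num 1])) F))"
| ax_d0c: "adm X V F \<Longrightarrow> length U = length X \<Longrightarrow> distinct U \<Longrightarrow>
     set U \<inter> (set X \<union> set V) = {} \<Longrightarrow>
     prov (allL (map VG X @ map VG V @ [VI n])
       (Imp (Cmp Gt (ivar n) (num 0))
         (Iff (Start X V F (map GV X @ map GV V @ [succ n]))
              (And F (exL (map VG U)
                 (And (lexless X U) (Start X V F (map GV U @ map GV V @ [ivar n]))))))))"
| ax_d1a: "adm X V F \<Longrightarrow> y \<notin> set X \<union> set V \<Longrightarrow>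
     prov (allL (map VG V @ [VG y])
       (Iff (AtLeast X V F (map GV V @ [GV y]))
            (exL (map VG X @ [VI n])
               (And (Start X V F (map GV X @ map GV V @ [ivar n])) (Cmp Ge (ivar n) (GV y))))))"
| ax_d1b: "adm X V F \<Longrightarrow> y \<notin> set X \<union> set V \<Longrightarrow>
     prov (allL (map VG V @ [VG y])
       (Iff (AtMost X V F (map GV V @ [GV y]))
            (allL (map VG X @ [VI n])
               (Imp (Start X V F (map GV X @ map GV V @ [ivar n])) (Cmp Le (ivar n) (GV y))))))"

end

theory Submission
  imports Defs
begin

text \<open>By \<open>D\<^sub>1\<close>, \<open>Atleast(V, n)\<close> says that \<open>Start(X, V, m)\<close> holds for some \<open>X\<close> and
  some \<open>m \<ge> n\<close>.  The formula \<open>\<exists>X Start(X, V, m)\<close> is antimonotone in \<open>m\<close>: for \<open>m \<le> 0\<close>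
  it holds outright by \<open>D\<^sub>0\<close>, and for \<open>m > 0\<close> the recursion clause of \<open>D\<^sub>0\<close> turns a witness
  at \<open>m + 1\<close> into one at \<open>m\<close>; the schema Ind propagates this single step down to any
  \<open>n \<le> m\<close>, which yields the first equivalence.  For the second, \<open>Atmost(V, n)\<close> says that
  every \<open>m\<close> with \<open>Start(X, V, m)\<close> satisfies \<open>m \<le> n\<close>; as \<open>m \<le> n \<or> m \<ge> n + 1\<close> is in Std,
  this is intuitionistically equivalent to the absence of such an \<open>m \<ge> n + 1\<close>, that is, to
  \<open>\<not> Atleast(V, n + 1)\<close>.\<close>

lemma allL_Nil [simp]: "allL [] A = A"
  and allL_Cons [simp]: "allL (v # vs) A = All v (allL vs A)"
  and allL_append [simp]: "allL (xs @ ys) A = allL xs (allL ys A)"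
  by (simp_all add: allL_def)

lemma exL_Nil [simp]: "exL [] A = A"
  and exL_Cons [simp]: "exL (v # vs) A = Ex v (exL vs A)"
  and exL_append [simp]: "exL (xs @ ys) A = exL xs (exL ys A)"
  by (simp_all add: exL_def)

lemma wf_allL [simp]: "wf (allL vs A) = wf A"
  by (induction vs) auto

lemma wf_exL [simp]: "wf (exL vs A) = wf A"
  by (induction vs) auto

lemma fv_allL [simp]: "fv (allL vs A) = fv A - set vs"
  by (induction vs) auto

lemma fv_exL [simp]: "fv (exL vs A) = fv A - set vs"
  by (induction vs) auto

lemma sigma0_allL [simp]: "sigma0 (allL vs A) = sigma0 A"
  by (induction vs) auto

lemma pure_allL [simp]: "pure (allL vs A) = pure A"
  by (induction vs) auto

lemma wf_lexless [simp]: "wf (lexless X U)"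
  by (induction X U rule: lexless.induct) auto

lemma is_int_gsubst: "is_int s \<Longrightarrow> is_int (gsubst v t s)"
  by (cases s; cases v) simp_all

lemma wf_subst: "wf F \<Longrightarrow> wf (subst v t F)"
proof (induction F)
  case (Start X V G ts)
  then have "ts \<noteq> []" by auto
  with Start show ?case by (simp add: last_map is_int_gsubst)
qed auto

lemma finite_fv: "finite (fv F)"
proof -
  have "finite (ivars s)" for s by (induction s) auto
  then have "finite (gvars t)" for t by (cases t) auto
  then show ?thesis by (induction F) auto
qed

lemma VI_notin_image_VG [simp]: "VI k \<notin> VG ` A"
  by auto

lemma VG_notin_ivars [simp]: "VG x \<notin> ivars a"
  by (induction a) auto

text \<open>Instantiating a quantifier by its own variable turns \<open>ax_allE\<close> and \<open>ax_exI\<close> into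
  \<open>\<forall>v A \<rightarrow> A\<close> and \<open>A \<rightarrow> \<exists>v A\<close>.\<close>

fun var_term :: "var \<Rightarrow> gterm" where
  "var_term (VG n) = GV n"
| "var_term (VI n) = GI (IV n)"

lemma fits_var_term [simp]: "fits v (var_term v)"
  by (cases v) auto

lemma subst_var_term [simp]: "subst v (var_term v) F = F"
proof -
  have "isubst n (IV n) s = s" for n s by (induction s) auto
  then have "gsubst v (var_term v) t = t" for t by (cases v; cases t) auto
  then show ?thesis by (induction F) (auto simp: map_idI)
qed

lemma free_for_var_term [simp]: "free_for (var_term v) v F"
proof -
  have "gvars (var_term v) = {v}" by (cases v) auto
  then show ?thesis by (induction F) auto
qed

lemma gsubst_nonfree: "v \<notin> gvars s \<Longrightarrow> gsubst v t s = s"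
proof -
  have "VI n \<notin> ivars r \<Longrightarrow> isubst n q r = r" for n q r by (induction r) auto
  then show "v \<notin> gvars s \<Longrightarrow> gsubst v t s = s"
    by (cases v; cases s) (auto split: gterm.split)
qed

lemma map_gsubst_nonfree: "\<forall>s\<in>set ss. v \<notin> gvars s \<Longrightarrow> map (gsubst v t) ss = ss"
  by (induction ss) (auto simp: gsubst_nonfree)

lemma map_gsubst_GV_nonfree: "y \<notin> set ys \<Longrightarrow> map (gsubst (VG y) t) (map GV ys) = map GV ys"
  by (intro map_gsubst_nonfree) auto

lemma subst_nonfree: "v \<notin> fv F \<Longrightarrow> subst v t F = F"
  by (induction F) (auto simp: map_gsubst_nonfree gsubst_nonfree)

lemma free_for_nonfree: "v \<notin> fv F \<Longrightarrow> free_for t v F"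
  by (induction F) auto

lemma subst_allL [simp]: "v \<notin> set vs \<Longrightarrow> subst v t (allL vs A) = allL vs (subst v t A)"
  by (induction vs) auto

lemma subst_exL [simp]: "v \<notin> set vs \<Longrightarrow> subst v t (exL vs A) = exL vs (subst v t A)"
  by (induction vs) auto

lemma free_for_allL [simp]:
  "\<forall>w\<in>set vs. w \<notin> gvars t \<Longrightarrow> free_for t v A \<Longrightarrow> free_for t v (allL vs A)"
  by (induction vs) auto

lemma free_for_exL [simp]:
  "\<forall>w\<in>set vs. w \<notin> gvars t \<Longrightarrow> free_for t v A \<Longrightarrow> free_for t v (exL vs A)"
  by (induction vs) auto

lemma subst_lexless [simp]: "subst (VI k) t (lexless X U) = lexless X U"
  by (induction X U rule: lexless.induct) auto

lemma free_for_lexless [simp]: "free_for t v (lexless X U)"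
  by (induction X U rule: lexless.induct) auto

lemma adm_VI_notin_fv: "adm X V F \<Longrightarrow> VI k \<notin> fv F"
  by (auto simp: adm_def)

lemma ex_fresh_distinct_list:
  fixes S :: "nat set"
  assumes "finite S"
  shows "\<exists>U. length U = k \<and> distinct U \<and> set U \<inter> S = {}"
proof -
  obtain B where B: "finite B" "card B = k" "S \<inter> B = {}"
    using finite_arbitrarily_large_disj[OF infinite_UNIV_nat assms] by blast
  then obtain U where "set U = B" "distinct U"
    using finite_distinct_list by blast
  with B show ?thesis by (metis Int_commute distinct_card)
qed

section \<open>Derived rules of \<open>HT\<^sub>#\<close>\<close>

lemma prov_wf: "prov A \<Longrightarrow> wf A"
  by (induction rule: prov.induct)
    (auto simp: wf_subst Neg_def Std_def adm_def Iff_def ivar_def num_def succ_def)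

lemma prov_imp_refl: "wf A \<Longrightarrow> prov (Imp A A)"
  by (metis ax_K ax_S r_mp wf.simps(9))

lemma prov_imp_weaken: "prov A \<Longrightarrow> wf B \<Longrightarrow> prov (Imp B A)"
  by (metis ax_K prov_wf r_mp)

lemma prov_imp_mp: "prov (Imp G A) \<Longrightarrow> prov (Imp G (Imp A C)) \<Longrightarrow> prov (Imp G C)"
proof -
  assume a: "prov (Imp G A)" and b: "prov (Imp G (Imp A C))"
  have "wf G" "wf A" "wf C" using prov_wf[OF a] prov_wf[OF b] by auto
  then have "prov (Imp (Imp G (Imp A C)) (Imp (Imp G A) (Imp G C)))" by (rule ax_S)
  with a b show ?thesis by (metis r_mp)
qed

lemma prov_imp_trans: "prov (Imp A B) \<Longrightarrow> prov (Imp B C) \<Longrightarrow> prov (Imp A C)"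
  by (metis prov_imp_mp prov_imp_weaken prov_wf wf.simps(9))

lemma prov_conjI: "prov (Imp G A) \<Longrightarrow> prov (Imp G B) \<Longrightarrow> prov (Imp G (And A B))"
  by (metis ax_andI prov_imp_mp prov_imp_trans prov_wf wf.simps(9))

lemma prov_conjD1: "prov (Imp G (And A B)) \<Longrightarrow> prov (Imp G A)"
  by (metis ax_andE1 prov_imp_trans prov_wf wf.simps(7,9))

lemma prov_conjD2: "prov (Imp G (And A B)) \<Longrightarrow> prov (Imp G B)"
  by (metis ax_andE2 prov_imp_trans prov_wf wf.simps(7,9))

lemma prov_curry: "prov (Imp (And A B) C) \<Longrightarrow> prov (Imp A (Imp B C))"
proof -
  assume h: "prov (Imp (And A B) C)"
  have w: "wf A" "wf B" "wf C" using prov_wf[OF h] by auto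
  have pair: "prov (Imp A (Imp B (And A B)))" using w(1,2) by (rule ax_andI)
  have hyp: "prov (Imp A (Imp B (Imp (And A B) C)))"
    using w h by (simp add: prov_imp_weaken)
  have "prov (Imp A (Imp (Imp B (Imp (And A B) C)) (Imp (Imp B (And A B)) (Imp B C))))"
    using w by (intro prov_imp_weaken[OF ax_S]) auto
  then show ?thesis using prov_imp_mp[OF pair prov_imp_mp[OF hyp]] by blast
qed

lemma prov_disjE:
  assumes "prov (Imp G (Or A B))" "prov (Imp (And G A) C)" "prov (Imp (And G B) C)"
  shows "prov (Imp G C)"
proof -
  have w: "wf G" "wf A" "wf B" "wf C"
    using prov_wf[OF assms(1)] prov_wf[OF assms(2)] by auto
  have "prov (Imp G (Imp (Imp A C) (Imp (Imp B C) (Imp (Or A B) C))))"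
    using w by (intro prov_imp_weaken[OF ax_orE]) auto
  then show ?thesis
    using assms prov_curry prov_imp_mp by meson
qed

lemma prov_botE: "prov (Imp G Bot) \<Longrightarrow> wf A \<Longrightarrow> prov (Imp G A)"
  using prov_imp_trans ax_botE by blast

lemma prov_iffI: "prov (Imp A B) \<Longrightarrow> prov (Imp B A) \<Longrightarrow> prov (Iff A B)"
  unfolding Iff_def by (metis ax_andI prov_wf r_mp)

lemma prov_iffD1: "prov (Iff A B) \<Longrightarrow> prov (Imp A B)"
  unfolding Iff_def by (metis ax_andE1 prov_wf r_mp wf.simps(7))

lemma prov_iffD2: "prov (Iff A B) \<Longrightarrow> prov (Imp B A)"
  unfolding Iff_def by (metis ax_andE2 prov_wf r_mp wf.simps(7))

lemma prov_allE: "prov (All v A) \<Longrightarrow> fits v t \<Longrightarrow> free_for t v A \<Longrightarrow> prov (subst v t A)"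
  by (metis ax_allE prov_wf r_mp wf.simps(10))

lemma prov_allL_gen: "prov A \<Longrightarrow> prov (allL vs A)"
  by (induction vs) (simp_all add: r_gen)

lemma prov_allL_imp: "wf A \<Longrightarrow> prov (Imp (allL vs A) A)"
proof (induction vs)
  case (Cons v vs)
  have "prov (Imp (All v (allL vs A)) (allL vs A))"
    using ax_allE[of "allL vs A" v "var_term v"] Cons.prems by simp
  with Cons show ?case by (simp add: prov_imp_trans)
qed (simp add: prov_imp_refl)

lemma prov_allL_strip: "prov (allL vs A) \<Longrightarrow> prov A"
  by (metis prov_allL_imp prov_wf r_mp wf_allL)

lemma prov_allL_intro:
  "prov (Imp B A) \<Longrightarrow> \<forall>v\<in>set vs. v \<notin> fv B \<Longrightarrow> prov (Imp B (allL vs A))"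
  by (induction vs) (simp_all add: r_allI)

lemma prov_exL_intro: "wf A \<Longrightarrow> prov (Imp A (exL vs A))"
proof (induction vs)
  case (Cons v vs)
  have "prov (Imp (exL vs A) (Ex v (exL vs A)))"
    using ax_exI[of "exL vs A" v "var_term v"] Cons.prems by simp
  with Cons show ?case by (simp add: prov_imp_trans)
qed (simp add: prov_imp_refl)

lemma prov_exL_elim:
  "prov (Imp A B) \<Longrightarrow> \<forall>v\<in>set vs. v \<notin> fv B \<Longrightarrow> prov (Imp (exL vs A) B)"
  by (induction vs) (simp_all add: r_exE)

lemma pless_VNum [simp]: "pless (VNum i) (VNum j) = (i < j)"
  by (simp add: pless_def)

text \<open>Std contains only sentences, so an open formula is reached through its universal
  closure.\<close>

lemma prov_std_open:
  assumes "wf F" "sigma0 F" "pure F" "\<forall>ag ai. sat ag ai F"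
  shows "prov F"
proof -
  obtain vs where vs: "set vs = fv F"
    using finite_list[OF finite_fv] by blast
  have "sat ag ai (allL vs F)" for ag ai
  proof (induction vs arbitrary: ag ai)
    case (Cons v vs)
    then show ?case by (cases v) auto
  qed (use assms(4) in simp)
  then have "allL vs F \<in> Std"
    using assms(1-3) vs by (simp add: Std_def)
  then show ?thesis using ax_std prov_allL_strip by blast
qed

definition start_at :: "nat list \<Rightarrow> nat list \<Rightarrow> form \<Rightarrow> nat list \<Rightarrow> gterm \<Rightarrow> form" where
  "start_at X V F Y t = Start X V F (map GV Y @ map GV V @ [t])"

definition ex_start :: "nat list \<Rightarrow> nat list \<Rightarrow> form \<Rightarrow> gterm \<Rightarrow> form" where
  "ex_start X V F t = exL (map VG X) (start_at X V F X t)"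

lemma wf_start_at [simp]: "adm X V F \<Longrightarrow> length Y = length X \<Longrightarrow> wf (start_at X V F Y (GI a))"
  by (simp add: start_at_def adm_def)

lemma wf_ex_start [simp]: "adm X V F \<Longrightarrow> wf (ex_start X V F (GI a))"
  by (simp add: ex_start_def)

lemma fv_start_at [simp]: "fv (start_at X V F Y t) = VG ` set Y \<union> VG ` set V \<union> gvars t"
  by (auto simp: start_at_def)

lemma fv_ex_start: "adm X V F \<Longrightarrow> fv (ex_start X V F (GI a)) = VG ` set V \<union> ivars a"
  by (auto simp: ex_start_def adm_def)

lemma subst_start_at [simp]:
  "subst (VI k) s (start_at X V F Y t) = start_at X V F Y (gsubst (VI k) s t)"
  by (simp add: start_at_def)

lemma subst_ex_start [simp]: "subst (VI k) s (ex_start X V F t) = ex_start X V F (gsubst (VI k) s t)"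
  by (simp add: ex_start_def)

lemma free_for_start_at [simp]: "free_for s v (start_at X V F Y t)"
  by (simp add: start_at_def)

lemma free_for_ex_start [simp]: "free_for (GI a) v (ex_start X V F t)"
  unfolding ex_start_def by (rule free_for_exL) auto

lemma prov_ex_start_cong:
  assumes "prov (Cmp Eq (GI a) (GI b))" "adm X V F"
  shows "prov (Imp (ex_start X V F (GI a)) (ex_start X V F (GI b)))"
proof -
  have "prov (Imp (Cmp Eq (GI a) (GI b))
      (Imp (subst (VI 0) (GI a) (ex_start X V F (ivar 0)))
           (subst (VI 0) (GI b) (ex_start X V F (ivar 0)))))"
    using assms(2) by (intro ax_eqsub) (auto simp: ivar_def)
  then have "prov (Imp (Cmp Eq (GI a) (GI b))
      (Imp (ex_start X V F (GI a)) (ex_start X V F (GI b))))"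
    by (simp add: ivar_def)
  with assms(1) show ?thesis by (rule r_mp)
qed

lemma prov_Start_imp_exL_rename:
  assumes "length xs = length us" "distinct xs" "set us \<inter> set xs = {}"
    "\<forall>x\<in>set xs. \<forall>s\<in>set pre \<union> set rest. VG x \<notin> gvars s"
    "wf (Start X V F (pre @ map GV xs @ rest))" "rest \<noteq> []"
  shows "prov (Imp (Start X V F (pre @ map GV us @ rest))
                   (exL (map VG xs) (Start X V F (pre @ map GV xs @ rest))))"
  using assms
proof (induction xs arbitrary: us pre)
  case Nil
  then show ?case by (simp add: prov_imp_refl)
next
  case (Cons x xs)
  obtain u us' where us: "us = u # us'"
    using Cons.prems(1) by (cases us) auto
  have IH: "prov (Imp (Start X V F (pre @ GV u # map GV us' @ rest))
      (exL (map VG xs) (Start X V F (pre @ GV u # map GV xs @ rest))))"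
    using Cons.IH[of us' "pre @ [GV u]"] Cons.prems us by (auto simp: last_append)
  let ?T = "exL (map VG xs) (Start X V F (pre @ GV x # map GV xs @ rest))"
  have "prov (Imp (subst (VG x) (GV u) ?T) (Ex (VG x) ?T))"
    using Cons.prems us by (intro ax_exI free_for_exL) auto
  moreover have "subst (VG x) (GV u) ?T
      = exL (map VG xs) (Start X V F (pre @ GV u # map GV xs @ rest))"
  proof -
    have "map (gsubst (VG x) (GV u)) (map GV xs) = map GV xs"
      using Cons.prems(2) by (intro map_gsubst_nonfree) auto
    with Cons.prems(2,4) show ?thesis
      by (subst subst_exL) (auto simp: map_gsubst_nonfree simp del: map_map)
  qed
  ultimately show ?case
    using prov_imp_trans[OF IH] us by simp
qed

lemma prov_start_at_imp_ex_start:
  assumes "adm X V F" "length U = length X" "set U \<inter> (set X \<union> set V) = {}"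
  shows "prov (Imp (start_at X V F U (GI a)) (ex_start X V F (GI a)))"
proof -
  have "prov (Imp (Start X V F ([] @ map GV U @ (map GV V @ [GI a])))
      (exL (map VG X) (Start X V F ([] @ map GV X @ (map GV V @ [GI a])))))"
    using assms by (intro prov_Start_imp_exL_rename) (auto simp: adm_def)
  then show ?thesis by (simp add: start_at_def ex_start_def)
qed

section \<open>Antimonotonicity of \<open>\<exists>X Start(X, V, m)\<close> in \<open>m\<close>\<close>

lemma prov_start_at_nonpos:
  assumes "adm X V F"
  shows "prov (Imp (Cmp Le (GI r) (num 0)) (start_at X V F X (GI r)))"
proof -
  have "prov (allL (map VG X @ map VG V)
      (All (VI 0) (Imp (Cmp Le (ivar 0) (num 0)) (start_at X V F X (ivar 0)))))"
    using ax_d0a[OF assms, of 0] by (simp add: start_at_def)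
  from prov_allE[OF prov_allL_strip[OF this], of "GI r"] show ?thesis
    by (simp add: ivar_def num_def)
qed

lemma prov_start_at_succ_pos:
  assumes adm: "adm X V F"
    and U: "length U = length X" "distinct U" "set U \<inter> (set X \<union> set V) = {}"
  shows "prov (Imp (Cmp Gt (GI r) (num 0))
    (Iff (start_at X V F X (GI (IPlus r (INum 1))))
         (And F (exL (map VG U) (And (lexless X U) (start_at X V F U (GI r)))))))"
proof -
  have "prov (allL (map VG X @ map VG V) (All (VI 0) (Imp (Cmp Gt (ivar 0) (num 0))
      (Iff (start_at X V F X (succ 0))
           (And F (exL (map VG U) (And (lexless X U) (start_at X V F U (ivar 0)))))))))"
    using ax_d0c[OF adm U, of 0] by (simp add: start_at_def)
  from prov_allE[OF prov_allL_strip[OF this], of "GI r"] show ?thesis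
    using adm_VI_notin_fv[OF adm, of 0]
    by (simp add: ivar_def num_def succ_def Iff_def subst_nonfree free_for_nonfree)
qed

text \<open>The single step \<open>m + 1 \<leadsto> m\<close>: for \<open>m \<le> 0\<close> by the first clause of \<open>D\<^sub>0\<close>, for
  \<open>m > 0\<close> by the recursion clause, whose witness \<open>U\<close> is renamed back to \<open>X\<close>.\<close>

lemma prov_ex_start_succ_imp:
  assumes adm: "adm X V F"
  shows "prov (Imp (ex_start X V F (GI (IPlus r (INum 1)))) (ex_start X V F (GI r)))"
proof -
  obtain U where U: "length U = length X" "distinct U" "set U \<inter> (set X \<union> set V) = {}"
    using ex_fresh_distinct_list[of "set X \<union> set V"] by blast
  let ?H = "start_at X V F X (GI (IPlus r (INum 1)))"
  let ?C = "ex_start X V F (GI r)"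
  let ?Le = "Cmp Le (GI r) (num 0)"
  let ?Gt = "Cmp Gt (GI r) (num 0)"
  let ?E = "exL (map VG U) (And (lexless X U) (start_at X V F U (GI r)))"
  have wf: "wf ?H" "wf ?C" "wf ?Gt" "wf ?Le" using adm by simp_all
  have "prov (Or ?Le ?Gt)" by (rule prov_std_open) (auto simp: num_def)
  then have cases: "prov (Imp ?H (Or ?Le ?Gt))" using wf(1) by (rule prov_imp_weaken)
  have "prov (Imp (start_at X V F X (GI r)) ?C)"
    unfolding ex_start_def using adm by (intro prov_exL_intro) simp
  then have nonpos: "prov (Imp (And ?H ?Le) ?C)"
    using prov_imp_trans[OF prov_imp_trans[OF ax_andE2[OF wf(1,4)] prov_start_at_nonpos[OF adm]]]
    by (simp add: num_def)
  have "prov (Imp (And ?H ?Gt) (Iff ?H (And F ?E)))"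
    using prov_imp_trans[OF ax_andE2[OF wf(1,3)] prov_start_at_succ_pos[OF adm U]] .
  then have "prov (Imp (And ?H ?Gt) ?E)"
    using prov_conjD2[OF prov_imp_mp[OF ax_andE1[OF wf(1,3)] prov_conjD1]]
    unfolding Iff_def by blast
  moreover have "prov (Imp (And (lexless X U) (start_at X V F U (GI r))) ?C)"
    using prov_imp_trans[OF ax_andE2 prov_start_at_imp_ex_start[OF adm U(1,3)]] adm U(1)
    by simp
  then have "prov (Imp ?E ?C)"
    using fv_ex_start[OF adm] U(3) by (intro prov_exL_elim) auto
  ultimately have pos: "prov (Imp (And ?H ?Gt) ?C)" by (rule prov_imp_trans)
  have "prov (Imp ?H ?C)" using prov_disjE[OF cases nonpos pos] .
  then show ?thesis
    unfolding ex_start_def[of X V F "GI (IPlus r (INum 1))"]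
    using fv_ex_start[OF adm] adm by (intro prov_exL_elim) (auto simp: adm_def)
qed

lemma prov_ex_start_minus:
  assumes adm: "adm X V F" and "d \<noteq> m"
  shows "prov (Imp (ex_start X V F (ivar m))
    (All (VI d) (Imp (Cmp Ge (ivar d) (num 0)) (ex_start X V F (GI (IMinus (IV m) (IV d)))))))"
proof -
  \<comment> \<open>Ind on \<open>d\<close>; the step rewrites \<open>m - d\<close> as \<open>(m - (d + 1)) + 1\<close> in Std.\<close>
  let ?P = "\<lambda>t. ex_start X V F (GI t)"
  let ?Ge = "Cmp Ge (ivar d) (num 0)"
  let ?Phi = "?P (IMinus (IV m) (IV d))"
  let ?r = "IMinus (IV m) (IPlus (IV d) (INum 1))"
  have ind: "prov (Imp (And (?P (IMinus (IV m) (INum 0))) (All (VI d) (Imp (And ?Ge ?Phi) (?P ?r))))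
      (All (VI d) (Imp ?Ge ?Phi)))"
    using ax_ind[of ?Phi d] adm assms(2) by (simp add: num_def succ_def)
  have "prov (Cmp Eq (GI (IV m)) (GI (IMinus (IV m) (INum 0))))"
    by (rule prov_std_open) auto
  then have base: "prov (Imp (ex_start X V F (ivar m)) (?P (IMinus (IV m) (INum 0))))"
    using prov_ex_start_cong[OF _ adm] by (simp add: ivar_def)
  have "prov (Cmp Eq (GI (IMinus (IV m) (IV d))) (GI (IPlus ?r (INum 1))))"
    by (rule prov_std_open) auto
  then have "prov (Imp ?Phi (?P ?r))"
    using prov_imp_trans[OF prov_ex_start_cong[OF _ adm] prov_ex_start_succ_imp[OF adm]] by blast
  then have "prov (Imp (And ?Ge ?Phi) (?P ?r))"
    using adm by (intro prov_imp_trans[OF ax_andE2]) simp_all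
  then have step: "prov (All (VI d) (Imp (And ?Ge ?Phi) (?P ?r)))" by (rule r_gen)
  have "wf (ex_start X V F (ivar m))" using adm by (simp add: ivar_def)
  then show ?thesis
    using prov_imp_trans[OF prov_conjI[OF base prov_imp_weaken[OF step]] ind] by blast
qed

lemma prov_ex_start_antimono:
  assumes adm: "adm X V F"
  shows "prov (Imp (And (ex_start X V F (ivar m)) (Cmp Ge (ivar m) (ivar n)))
                   (ex_start X V F (ivar n)))"
proof -
  let ?d = "Suc m"
  let ?t = "GI (IMinus (IV m) (IV n))"
  let ?B = "Imp (Cmp Ge (ivar ?d) (num 0)) (ex_start X V F (GI (IMinus (IV m) (IV ?d))))"
  let ?G = "And (ex_start X V F (ivar m)) (Cmp Ge (ivar m) (ivar n))"
  let ?Q = "ex_start X V F (GI (IMinus (IV m) (IMinus (IV m) (IV n))))"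
  have wf: "wf (ex_start X V F (ivar m))" "wf (Cmp Ge (ivar m) (ivar n))"
    using adm by (simp_all add: ivar_def)
  have inst_d: "prov (Imp ?G (All (VI ?d) ?B))"
    using prov_imp_trans[OF ax_andE1[OF wf] prov_ex_start_minus[OF adm, of ?d]] by simp
  have "prov (Imp (All (VI ?d) ?B) (subst (VI ?d) ?t ?B))"
    using adm by (intro ax_allE) (auto simp: ivar_def num_def)
  then have at_t: "prov (Imp (All (VI ?d) ?B) (Imp (Cmp Ge ?t (num 0)) ?Q))"
    by (simp add: ivar_def num_def)
  have "prov (Imp (Cmp Ge (ivar m) (ivar n)) (Cmp Ge ?t (num 0)))"
    by (rule prov_std_open) (auto simp: ivar_def num_def)
  then have "prov (Imp ?G (Cmp Ge ?t (num 0)))"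
    using prov_imp_trans[OF ax_andE2[OF wf]] by blast
  then have "prov (Imp ?G ?Q)"
    using prov_imp_mp[OF _ prov_imp_trans[OF inst_d at_t]] by blast
  moreover have "prov (Cmp Eq (GI (IMinus (IV m) (IMinus (IV m) (IV n)))) (GI (IV n)))"
    by (rule prov_std_open) auto
  ultimately show ?thesis
    using prov_imp_trans[OF _ prov_ex_start_cong[OF _ adm]] by (simp add: ivar_def)
qed

lemma prov_AtLeast_iff_exL:
  assumes adm: "adm X V F" and m: "VI m \<notin> ivars a"
  shows "prov (Iff (AtLeast X V F (map GV V @ [GI a]))
     (exL (map VG X @ [VI m]) (And (start_at X V F X (ivar m)) (Cmp Ge (ivar m) (GI a)))))"
proof -
  obtain y where y: "y \<notin> set X \<union> set V"
    using ex_new_if_finite[OF infinite_UNIV_nat] by blast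
  let ?B = "Iff (AtLeast X V F (map GV V @ [GV y]))
     (exL (map VG X @ [VI m]) (And (start_at X V F X (ivar m)) (Cmp Ge (ivar m) (GV y))))"
  have "prov (allL (map VG V) (All (VG y) ?B))"
    using ax_d1a[OF adm y, of m] by (simp add: start_at_def)
  then have "prov (subst (VG y) (GI a) ?B)"
    using m by (intro prov_allE[OF prov_allL_strip]) (simp_all add: Iff_def ivar_def start_at_def)
  moreover have "VG y \<notin> set (map VG X)" using y by auto
  ultimately show ?thesis
    using y by (simp add: Iff_def ivar_def start_at_def map_gsubst_GV_nonfree del: map_map)
qed

lemma prov_AtMost_iff_allL:
  assumes adm: "adm X V F" and m: "VI m \<notin> ivars a"
  shows "prov (Iff (AtMost X V F (map GV V @ [GI a]))
     (allL (map VG X @ [VI m]) (Imp (start_at X V F X (ivar m)) (Cmp Le (ivar m) (GI a)))))"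
proof -
  obtain y where y: "y \<notin> set X \<union> set V"
    using ex_new_if_finite[OF infinite_UNIV_nat] by blast
  let ?B = "Iff (AtMost X V F (map GV V @ [GV y]))
     (allL (map VG X @ [VI m]) (Imp (start_at X V F X (ivar m)) (Cmp Le (ivar m) (GV y))))"
  have "prov (allL (map VG V) (All (VG y) ?B))"
    using ax_d1b[OF adm y, of m] by (simp add: start_at_def)
  then have "prov (subst (VG y) (GI a) ?B)"
    using m by (intro prov_allE[OF prov_allL_strip]) (simp_all add: Iff_def ivar_def start_at_def)
  moreover have "VG y \<notin> set (map VG X)" using y by auto
  ultimately show ?thesis
    using y by (simp add: Iff_def ivar_def start_at_def map_gsubst_GV_nonfree del: map_map)
qed

lemma adm_VG_X_notin_V: "adm X V F \<Longrightarrow> \<forall>v\<in>set (map VG X). v \<notin> VG ` set V"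
  by (auto simp: adm_def)

lemma prov_AtLeast_iff_ex_start:
  assumes adm: "adm X V F"
  shows "prov (Iff (AtLeast X V F (map GV V @ [ivar n])) (ex_start X V F (ivar n)))"
proof -
  define m where "m = Suc n"
  have "m \<noteq> n" by (simp add: m_def)
  let ?AL = "AtLeast X V F (map GV V @ [ivar n])"
  let ?S = "start_at X V F X (ivar m)"
  let ?Ge = "Cmp Ge (ivar m) (ivar n)"
  let ?E = "exL (map VG X @ [VI m]) (And ?S ?Ge)"
  have D: "prov (Iff ?AL ?E)"
    using prov_AtLeast_iff_exL[OF adm, of m "IV n"] \<open>m \<noteq> n\<close> by (simp add: ivar_def)
  have wf: "wf ?S" "wf ?Ge" using adm by (simp_all add: ivar_def)
  have "prov (Imp (And ?S ?Ge) (ex_start X V F (ivar m)))"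
    using prov_imp_trans[OF ax_andE1[OF wf] prov_exL_intro[OF wf(1)]] by (simp add: ex_start_def)
  then have "prov (Imp (And ?S ?Ge) (ex_start X V F (ivar n)))"
    using prov_imp_trans[OF prov_conjI[OF _ ax_andE2[OF wf]] prov_ex_start_antimono[OF adm]] by blast
  then have "prov (Imp ?E (ex_start X V F (ivar n)))"
    using fv_ex_start[OF adm, of "IV n"] adm_VG_X_notin_V[OF adm] \<open>m \<noteq> n\<close>
    by (intro prov_exL_elim) (auto simp: ivar_def)
  then have to_ex_start: "prov (Imp ?AL (ex_start X V F (ivar n)))"
    using prov_iffD1[OF D] prov_imp_trans by blast
  let ?Sn = "start_at X V F X (ivar n)"
  have "prov (Cmp Ge (ivar n) (ivar n))" by (rule prov_std_open) (auto simp: ivar_def)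
  then have "prov (Imp ?Sn (And ?Sn (Cmp Ge (ivar n) (ivar n))))"
    using adm by (intro prov_conjI prov_imp_refl prov_imp_weaken) (simp_all add: ivar_def)
  moreover have "prov (Imp (subst (VI m) (ivar n) (And ?S ?Ge)) (Ex (VI m) (And ?S ?Ge)))"
    using wf by (intro ax_exI) (auto simp: ivar_def)
  moreover have "prov (Imp (Ex (VI m) (And ?S ?Ge)) ?E)"
    using prov_exL_intro[of "Ex (VI m) (And ?S ?Ge)" "map VG X"] wf by simp
  ultimately have "prov (Imp ?Sn ?AL)"
    using \<open>m \<noteq> n\<close> prov_iffD2[OF D] by (simp add: ivar_def) (meson prov_imp_trans)
  then have from_ex_start: "prov (Imp (ex_start X V F (ivar n)) ?AL)"
    unfolding ex_start_def using adm_VG_X_notin_V[OF adm]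
    by (intro prov_exL_elim) (auto simp: ivar_def)
  show ?thesis using prov_iffI[OF to_ex_start from_ex_start] .
qed

lemma prov_AtMost_imp_not_AtLeast_succ:
  assumes adm: "adm X V F"
  shows "prov (Imp (AtMost X V F (map GV V @ [ivar n]))
                   (Neg (AtLeast X V F (map GV V @ [succ n]))))"
proof -
  define m where "m = Suc n"
  have "m \<noteq> n" by (simp add: m_def)
  let ?AM = "AtMost X V F (map GV V @ [ivar n])"
  let ?AL1 = "AtLeast X V F (map GV V @ [succ n])"
  let ?S = "start_at X V F X (ivar m)"
  let ?Ge1 = "Cmp Ge (ivar m) (succ n)"
  let ?Le = "Cmp Le (ivar m) (ivar n)"
  let ?A = "allL (map VG X @ [VI m]) (Imp ?S ?Le)"
  have D1: "prov (Iff ?AL1 (exL (map VG X @ [VI m]) (And ?S ?Ge1)))"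
    using prov_AtLeast_iff_exL[OF adm, of m "IPlus (IV n) (INum 1)"] \<open>m \<noteq> n\<close>
    by (simp add: ivar_def succ_def)
  have D2: "prov (Iff ?AM ?A)"
    using prov_AtMost_iff_allL[OF adm, of m "IV n"] \<open>m \<noteq> n\<close> by (simp add: ivar_def)
  have wf: "wf ?S" "wf ?Ge1" "wf ?A" "wf ?AM" "wf ?AL1" "wf (And ?S ?Ge1)"
    using adm by (simp_all add: ivar_def succ_def adm_def)
  let ?C = "And (And ?S ?Ge1) ?A"
  have start: "prov (Imp ?C ?S)"
    using prov_imp_trans[OF ax_andE1[OF wf(6,3)] ax_andE1[OF wf(1,2)]] .
  have above: "prov (Imp ?C ?Ge1)"
    using prov_imp_trans[OF ax_andE1[OF wf(6,3)] ax_andE2[OF wf(1,2)]] .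
  have "prov (Imp ?C (Imp ?S ?Le))"
    using prov_imp_trans[OF ax_andE2[of "And ?S ?Ge1" ?A] prov_allL_imp[of "Imp ?S ?Le"]] wf
    by simp
  then have below: "prov (Imp ?C ?Le)" using start by (rule prov_imp_mp[rotated])
  have "prov (Imp (And ?Le ?Ge1) Bot)"
    by (rule prov_std_open) (auto simp: ivar_def succ_def)
  then have "prov (Imp ?C Bot)"
    using prov_imp_trans[OF prov_conjI[OF below above]] by blast
  then have "prov (Imp (exL (map VG X @ [VI m]) (And ?S ?Ge1)) (Imp ?A Bot))"
    by (intro prov_exL_elim prov_curry) (auto simp: ivar_def)
  then have "prov (Imp (And ?AM ?AL1) (Imp ?A Bot))"
    using prov_imp_trans[OF ax_andE2[OF wf(4,5)] prov_iffD1[OF D1]] prov_imp_trans by blast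
  moreover have "prov (Imp (And ?AM ?AL1) ?A)"
    using prov_imp_trans[OF ax_andE1[OF wf(4,5)] prov_iffD1[OF D2]] .
  ultimately have "prov (Imp (And ?AM ?AL1) Bot)" by (rule prov_imp_mp[rotated])
  then show ?thesis unfolding Neg_def by (rule prov_curry)
qed

lemma prov_not_AtLeast_succ_imp_AtMost:
  assumes adm: "adm X V F"
  shows "prov (Imp (Neg (AtLeast X V F (map GV V @ [succ n])))
                   (AtMost X V F (map GV V @ [ivar n])))"
proof -
  define m where "m = Suc n"
  have "m \<noteq> n" by (simp add: m_def)
  let ?N = "Neg (AtLeast X V F (map GV V @ [succ n]))"
  let ?S = "start_at X V F X (ivar m)"
  let ?Ge1 = "Cmp Ge (ivar m) (succ n)"
  let ?Le = "Cmp Le (ivar m) (ivar n)"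
  let ?K = "And ?N ?S"
  have D1: "prov (Iff (AtLeast X V F (map GV V @ [succ n])) (exL (map VG X @ [VI m]) (And ?S ?Ge1)))"
    using prov_AtLeast_iff_exL[OF adm, of m "IPlus (IV n) (INum 1)"] \<open>m \<noteq> n\<close>
    by (simp add: ivar_def succ_def)
  have D2: "prov (Iff (AtMost X V F (map GV V @ [ivar n])) (allL (map VG X @ [VI m]) (Imp ?S ?Le)))"
    using prov_AtMost_iff_allL[OF adm, of m "IV n"] \<open>m \<noteq> n\<close> by (simp add: ivar_def)
  have wf: "wf ?N" "wf ?S" "wf ?Ge1" "wf ?Le" "wf ?K"
    using adm by (simp_all add: ivar_def succ_def adm_def Neg_def)
  have "prov (Or ?Le ?Ge1)" by (rule prov_std_open) (auto simp: ivar_def succ_def)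
  then have cases: "prov (Imp ?K (Or ?Le ?Ge1))" using wf(5) by (rule prov_imp_weaken)
  have "prov (Imp (And ?K ?Ge1) (And ?S ?Ge1))"
    using prov_conjI[OF prov_imp_trans[OF ax_andE1[OF wf(5,3)] ax_andE2[OF wf(1,2)]]
        ax_andE2[OF wf(5,3)]] .
  moreover have "prov (Imp (And ?S ?Ge1) (exL (map VG X @ [VI m]) (And ?S ?Ge1)))"
    using wf(2,3) by (intro prov_exL_intro) simp
  ultimately have "prov (Imp (And ?K ?Ge1) (AtLeast X V F (map GV V @ [succ n])))"
    using prov_iffD2[OF D1] by (blast intro: prov_imp_trans)
  moreover have "prov (Imp (And ?K ?Ge1) ?N)"
    using prov_imp_trans[OF ax_andE1[OF wf(5,3)] ax_andE1[OF wf(1,2)]] .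
  ultimately have "prov (Imp (And ?K ?Ge1) ?Le)"
    unfolding Neg_def using prov_botE[OF prov_imp_mp wf(4)] by blast
  then have "prov (Imp ?K ?Le)"
    using prov_disjE[OF cases ax_andE2[OF wf(5,4)]] by blast
  then have "prov (Imp ?N (allL (map VG X @ [VI m]) (Imp ?S ?Le)))"
    using adm_VG_X_notin_V[OF adm] \<open>m \<noteq> n\<close>
    by (intro prov_allL_intro prov_curry) (auto simp: Neg_def ivar_def succ_def)
  then show ?thesis using prov_iffD2[OF D2] by (rule prov_imp_trans)
qed

theorem proposition1:
  fixes X V :: "nat list" and F :: form and n :: nat
  assumes "adm X V F"
  shows "prov (allL (map VG V @ [VI n])
            (Iff (AtLeast X V F (map GV V @ [ivar n]))
                 (exL (map VG X) (Start X V F (map GV X @ map GV V @ [ivar n])))))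
       \<and> prov (allL (map VG V @ [VI n])
            (Iff (AtMost X V F (map GV V @ [ivar n]))
                 (Neg (AtLeast X V F (map GV V @ [succ n])))))"
proof
  show "prov (allL (map VG V @ [VI n])
      (Iff (AtLeast X V F (map GV V @ [ivar n]))
           (exL (map VG X) (Start X V F (map GV X @ map GV V @ [ivar n])))))"
    using prov_allL_gen[OF prov_AtLeast_iff_ex_start[OF assms]]
    unfolding ex_start_def start_at_def .
  show "prov (allL (map VG V @ [VI n])
      (Iff (AtMost X V F (map GV V @ [ivar n])) (Neg (AtLeast X V F (map GV V @ [succ n])))))"
    using assms by (intro prov_allL_gen prov_iffI prov_AtMost_imp_not_AtLeast_succ
        prov_not_AtLeast_succ_imp_AtMost)
qed

end
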